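(* Let $\gamma\in(1,2]$ and let $(\rho_L,u_L,p_L)$, $(\rho_R,u_R,p_R)$ be two states with $\rho_K,p_K>0$, $u_K\in\mathbb R^d$, $m_K=\rho_Ku_K$, $a_K=\sqrt{\gamma p_K/\rho_K}$. With $\langle f\rangle=\frac{f_L+f_R}2$ and $[\![f]\!]=f_R-f_L$, it holds $$\langle|u|^2\rangle\le(\|\langle u\rangle\|+\|[\![u]\!]\|)^2,\quad\langle a^2\rangle\le2\langle a\rangle^2,\quad\langle p\rangle\langle\rho\rangle^{-1}\le\frac4\gamma\langle a\rangle^2,$$ $$\langle\rho|u|^2\rangle\langle\rho\rangle^{-1}\le2(\|\langle u\rangle\|+\|[\![u]\!]\|)^2,\quad\|\langle m\rangle\|\langle\rho\rangle^{-1}\le\|\langle u\rangle\|+\frac12\|[\![u]\!]\|.$$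
   Context: $\|\cdot\|$ denotes the $\ell^1$ norm of a vector in $\mathbb R^d$. *)

theory Defs
  imports "HOL-Analysis.Analysis"
begin

text \<open>The l1 norm of a vector in R^d (the paper's double-bar norm).\<close>
definition l1norm :: "real ^ 'd \<Rightarrow> real" where
  "l1norm x = (\<Sum>i\<in>UNIV. \<bar>x $ i\<bar>)"

definition avg :: "'a::real_vector \<Rightarrow> 'a \<Rightarrow> 'a" where
  "avg fL fR = (1/2) *\<^sub>R (fL + fR)"

definition jump :: "'a::real_vector \<Rightarrow> 'a \<Rightarrow> 'a" where
  "jump fL fR = fR - fL"

definition sound_speed :: "real \<Rightarrow> real \<Rightarrow> real \<Rightarrow> real" where
  "sound_speed \<gamma> \<rho> p = sqrt (\<gamma> * p / \<rho>)"

end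

theory Submission
  imports Defs
begin

text \<open>Both states lie within \<open>\<langle>u\<rangle> \<plusminus> \<lbrakk>u\<rbrakk>/2\<close>, so each one-sided velocity is bounded in the
  \<open>\<ell>\<^sup>1\<close>-norm, and a fortiori in the Euclidean norm, by \<open>S = \<parallel>\<langle>u\<rangle>\<parallel> + \<parallel>\<lbrakk>u\<rbrakk>\<parallel>/2\<close>.
  Quotients by \<open>\<langle>\<rho>\<rangle>\<close> are density-weighted averages, hence bounded by the larger of the two
  values; and since \<open>p = \<rho> a\<^sup>2/\<gamma>\<close>, the pressure quotient is a weighted average of \<open>a\<^sup>2/\<gamma>\<close>,
  which is at most \<open>(a\<^sub>L + a\<^sub>R)\<^sup>2/\<gamma>\<close>.\<close>

lemma l1norm_nonneg: "0 \<le> l1norm x"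
  unfolding l1norm_def by (simp add: sum_nonneg)

lemma l1norm_triangle: "l1norm (x + y) \<le> l1norm x + l1norm y"
  unfolding l1norm_def by (simp add: sum.distrib[symmetric] sum_mono abs_triangle_ineq)

lemma l1norm_scaleR: "l1norm (c *\<^sub>R x) = \<bar>c\<bar> * l1norm x"
  unfolding l1norm_def by (simp add: sum_distrib_left abs_mult)

lemma l1norm_minus: "l1norm (- x) = l1norm x"
  unfolding l1norm_def by simp

lemma norm_le_l1norm: "norm x \<le> l1norm x"
  unfolding l1norm_def by (rule norm_le_l1_cart)

lemma l1norm_le_avg_jump:
  fixes uL uR :: "real ^ 'd"
  shows "l1norm uL \<le> l1norm (avg uL uR) + 1/2 * l1norm (jump uL uR)"
    and "l1norm uR \<le> l1norm (avg uL uR) + 1/2 * l1norm (jump uL uR)"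
proof -
  have "uL = avg uL uR + (-1/2) *\<^sub>R jump uL uR" "uR = avg uL uR + (1/2) *\<^sub>R jump uL uR"
    unfolding avg_def jump_def by (simp_all add: vec_eq_iff field_simps)
  then show "l1norm uL \<le> l1norm (avg uL uR) + 1/2 * l1norm (jump uL uR)"
    and "l1norm uR \<le> l1norm (avg uL uR) + 1/2 * l1norm (jump uL uR)"
    using l1norm_triangle[of "avg uL uR" "(-1/2) *\<^sub>R jump uL uR"]
      l1norm_triangle[of "avg uL uR" "(1/2) *\<^sub>R jump uL uR"]
    by (simp_all add: l1norm_scaleR l1norm_minus)
qed

lemma norm_sq_le_avg_jump:
  fixes uL uR :: "real ^ 'd"
  shows "(norm uL)\<^sup>2 \<le> (l1norm (avg uL uR) + l1norm (jump uL uR))\<^sup>2"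
    and "(norm uR)\<^sup>2 \<le> (l1norm (avg uL uR) + l1norm (jump uL uR))\<^sup>2"
proof -
  have "l1norm uL \<le> l1norm (avg uL uR) + l1norm (jump uL uR)"
    and "l1norm uR \<le> l1norm (avg uL uR) + l1norm (jump uL uR)"
    using l1norm_le_avg_jump[where uL = uL and uR = uR] l1norm_nonneg[of "jump uL uR"] by auto
  then show "(norm uL)\<^sup>2 \<le> (l1norm (avg uL uR) + l1norm (jump uL uR))\<^sup>2"
    and "(norm uR)\<^sup>2 \<le> (l1norm (avg uL uR) + l1norm (jump uL uR))\<^sup>2"
    using norm_le_l1norm[of uL] norm_le_l1norm[of uR] by (simp_all add: power_mono)
qed

lemma l1norm_avg_scaleR_le:
  fixes uL uR :: "real ^ 'd"
  assumes "0 \<le> \<rho>L" "0 \<le> \<rho>R"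
  shows "l1norm (avg (\<rho>L *\<^sub>R uL) (\<rho>R *\<^sub>R uR)) \<le> avg (\<rho>L * l1norm uL) (\<rho>R * l1norm uR)"
  using l1norm_triangle[of "\<rho>L *\<^sub>R uL" "\<rho>R *\<^sub>R uR"] assms
  unfolding avg_def by (simp add: l1norm_scaleR)

lemma avg_le:
  fixes x y S :: real
  shows "x \<le> S \<Longrightarrow> y \<le> S \<Longrightarrow> avg x y \<le> S"
  unfolding avg_def by simp

lemma weighted_avg_le:
  fixes rL rR xL xR S :: real
  assumes "0 < rL" "0 < rR" "xL \<le> S" "xR \<le> S"
  shows "avg (rL * xL) (rR * xR) / avg rL rR \<le> S"
proof -
  have "rL * xL + rR * xR \<le> rL * S + rR * S"
    using assms by (intro add_mono mult_left_mono) auto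
  then show ?thesis
    using assms unfolding avg_def by (simp add: field_simps)
qed

lemma avg_squares_le:
  fixes x y :: real
  assumes "0 \<le> x" "0 \<le> y"
  shows "avg (x\<^sup>2) (y\<^sup>2) \<le> 2 * (avg x y)\<^sup>2"
  using assms unfolding avg_def by (simp add: power2_eq_square algebra_simps)

lemma weighted_avg_squares_le:
  fixes rL rR x y :: real
  assumes "0 < rL" "0 < rR" "0 \<le> x" "0 \<le> y"
  shows "avg (rL * x\<^sup>2) (rR * y\<^sup>2) / avg rL rR \<le> 4 * (avg x y)\<^sup>2"
proof -
  have "x\<^sup>2 \<le> (x + y)\<^sup>2" "y\<^sup>2 \<le> (x + y)\<^sup>2"
    using assms by (simp_all add: power_mono)
  then have "avg (rL * x\<^sup>2) (rR * y\<^sup>2) / avg rL rR \<le> (x + y)\<^sup>2"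
    using assms by (intro weighted_avg_le)
  also have "\<dots> = 4 * (avg x y)\<^sup>2"
    unfolding avg_def by (simp add: power2_eq_square algebra_simps)
  finally show ?thesis .
qed

lemma sound_speed_nonneg:
  "0 \<le> \<gamma> \<Longrightarrow> 0 \<le> \<rho> \<Longrightarrow> 0 \<le> p \<Longrightarrow> 0 \<le> sound_speed \<gamma> \<rho> p"
  unfolding sound_speed_def by simp

lemma pressure_eq_sound_speed:
  assumes "0 < \<gamma>" "0 < \<rho>" "0 \<le> p"
  shows "p = \<rho> * (sound_speed \<gamma> \<rho> p)\<^sup>2 / \<gamma>"
  using assms unfolding sound_speed_def by simp

lemma pressure_quotient_le:
  assumes "0 < \<gamma>" "0 < \<rho>L" "0 < \<rho>R" "0 \<le> pL" "0 \<le> pR"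
  defines "aL \<equiv> sound_speed \<gamma> \<rho>L pL" and "aR \<equiv> sound_speed \<gamma> \<rho>R pR"
  shows "avg pL pR / avg \<rho>L \<rho>R \<le> 4 / \<gamma> * (avg aL aR)\<^sup>2"
proof -
  have "pL = \<rho>L * aL\<^sup>2 / \<gamma>" "pR = \<rho>R * aR\<^sup>2 / \<gamma>"
    unfolding aL_def aR_def using assms by (simp_all add: pressure_eq_sound_speed)
  then have "avg pL pR = avg (\<rho>L * aL\<^sup>2) (\<rho>R * aR\<^sup>2) / \<gamma>"
    unfolding avg_def by (simp add: add_divide_distrib)
  then have "avg pL pR / avg \<rho>L \<rho>R = (avg (\<rho>L * aL\<^sup>2) (\<rho>R * aR\<^sup>2) / avg \<rho>L \<rho>R) / \<gamma>"
    by simp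
  also have "\<dots> \<le> 4 * (avg aL aR)\<^sup>2 / \<gamma>"
    unfolding aL_def aR_def using assms
    by (intro divide_right_mono weighted_avg_squares_le) (auto simp: sound_speed_nonneg)
  finally show ?thesis
    by simp
qed

theorem lemmaA1:
  fixes \<gamma> \<rho>L \<rho>R pL pR :: real and uL uR :: "real ^ 'd"
  assumes "1 < \<gamma>" and "\<gamma> \<le> 2"
    and "\<rho>L > 0" and "\<rho>R > 0" and "pL > 0" and "pR > 0"
  defines "mL \<equiv> \<rho>L *\<^sub>R uL" and "mR \<equiv> \<rho>R *\<^sub>R uR"
    and "aL \<equiv> sound_speed \<gamma> \<rho>L pL" and "aR \<equiv> sound_speed \<gamma> \<rho>R pR"
  shows "avg ((norm uL)\<^sup>2) ((norm uR)\<^sup>2)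
           \<le> (l1norm (avg uL uR) + l1norm (jump uL uR))\<^sup>2 \<and>
         avg (aL\<^sup>2) (aR\<^sup>2) \<le> 2 * (avg aL aR)\<^sup>2 \<and>
         avg pL pR / avg \<rho>L \<rho>R \<le> 4 / \<gamma> * (avg aL aR)\<^sup>2 \<and>
         avg (\<rho>L * (norm uL)\<^sup>2) (\<rho>R * (norm uR)\<^sup>2) / avg \<rho>L \<rho>R
           \<le> 2 * (l1norm (avg uL uR) + l1norm (jump uL uR))\<^sup>2 \<and>
         l1norm (avg mL mR) / avg \<rho>L \<rho>R
           \<le> l1norm (avg uL uR) + 1/2 * l1norm (jump uL uR)"
proof -
  have sound_speed_bound: "avg (aL\<^sup>2) (aR\<^sup>2) \<le> 2 * (avg aL aR)\<^sup>2"
    unfolding aL_def aR_def using assms by (intro avg_squares_le) (simp_all add: sound_speed_nonneg)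
  have pressure_bound: "avg pL pR / avg \<rho>L \<rho>R \<le> 4 / \<gamma> * (avg aL aR)\<^sup>2"
    unfolding aL_def aR_def using assms by (intro pressure_quotient_le) auto
  have "avg (\<rho>L * (norm uL)\<^sup>2) (\<rho>R * (norm uR)\<^sup>2) / avg \<rho>L \<rho>R
      \<le> (l1norm (avg uL uR) + l1norm (jump uL uR))\<^sup>2"
    using assms norm_sq_le_avg_jump by (intro weighted_avg_le)
  also have "\<dots> \<le> 2 * (l1norm (avg uL uR) + l1norm (jump uL uR))\<^sup>2"
    by simp
  finally have kinetic_bound: "avg (\<rho>L * (norm uL)\<^sup>2) (\<rho>R * (norm uR)\<^sup>2) / avg \<rho>L \<rho>R
      \<le> 2 * (l1norm (avg uL uR) + l1norm (jump uL uR))\<^sup>2" .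
  have "l1norm (avg mL mR) / avg \<rho>L \<rho>R \<le> avg (\<rho>L * l1norm uL) (\<rho>R * l1norm uR) / avg \<rho>L \<rho>R"
    using l1norm_avg_scaleR_le[of \<rho>L \<rho>R uL uR] assms
    unfolding mL_def mR_def by (intro divide_right_mono) (auto simp: avg_def)
  also have "\<dots> \<le> l1norm (avg uL uR) + 1/2 * l1norm (jump uL uR)"
    using assms l1norm_le_avg_jump by (intro weighted_avg_le)
  finally have momentum_bound: "l1norm (avg mL mR) / avg \<rho>L \<rho>R
      \<le> l1norm (avg uL uR) + 1/2 * l1norm (jump uL uR)" .
  show ?thesis
    using avg_le[OF norm_sq_le_avg_jump] sound_speed_bound pressure_bound kinetic_bound momentum_bound
    by blast
qed

end
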